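(* Let $G=(m,n,\boldsymbol{c},\boldsymbol{d},r_{\max},r_{\min})$ be an interbank lending game whose lenders are indexed so that $c_1\le c_2\le\dots\le c_m$. Set $c_{m+1}=\infty$, $D=\sum_{k\in B}d_k$, and let $\bar m$ be the least index in $\{0,1,\dots,m\}$ such that $$c_{\bar m+1}>\frac{1}{m-\bar m+1}\Bigl(D-\sum_{\ell=1}^{\bar m}c_\ell\Bigr).$$ Let $\bar L=\{1,\dots,\bar m\}$ and $q=\frac{1}{m-\bar m+1}\bigl(1-\frac{\sum_{\ell\in\bar L}c_\ell}{D}\bigr)$. Define $\boldsymbol{s}^*$ by $s^*_{ij}=\frac{c_i}{D}d_j$ for $i\in\bar L$, $j\in B$, and $s^*_{ij}=q\,d_j$ for $i\in L\setminus\bar L$, $j\in B$; and define multipliers $\mu_i=(r_{\min}-r_{\max})\bigl(\frac{c_i}{D}-q\bigr)$ for $i\in\bar L$, $\mu_i=0$ for $i\in L\setminus\bar L$, and $\mu_{ij}=0$ for all $i\in L,j\in B$. Then $(\boldsymbol{s}^*,\boldsymbol{\mu})$ satisfies all of the following Karush–Kuhn–Tucker conditions for the problem of maximising $\Phi(\boldsymbol{s})$ subject to $\sum_{j\in B}s_{ij}\le c_i$ ($i\in L$) and $s_{ij}\ge0$ ($i\in L,j\in B$): (1) primal feasibility: $\sum_{j\in B}s^*_{ij}\le c_i$ and $s^*_{ij}\ge0$ for all $i,j$; (2) stationarity: for all $i\in L,j\in B$, $(r_{\min}-r_{\max})\bigl(\frac{1}{d_j}(s^*_{ij}+\sum_{k\in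 L}s^*_{kj})-1\bigr)-\mu_i+\mu_{ij}=0$ (the first term being $\partial\Phi/\partial s_{ij}$ at $\boldsymbol{s}^*$); (3) dual feasibility: $\mu_i\ge0$ and $\mu_{ij}\ge0$ for all $i,j$; (4) complementary slackness: $\mu_i(c_i-\sum_{j\in B}s^*_{ij})=0$ and $\mu_{ij}s^*_{ij}=0$ for all $i,j$. Consequently, $\boldsymbol{s}^*$ is the unique pure Nash equilibrium of $G$.
   Context: An interbank lending game $G=(m,n,\boldsymbol{c},\boldsymbol{d},r_{\max},r_{\min})$ consists of positive integers $m,n$, budgets $\boldsymbol{c}\in\mathbb{R}_{>0}^m$, demands $\boldsymbol{d}\in\mathbb{R}_{>0}^n$ and reals $0<r_{\min}<r_{\max}$. The players are the lenders $L=\{1,\dots,m\}$; $B=\{1,\dots,n\}$ is the set of borrowers. Lender $i$'s strategy set is $S_i=\{s_i\in\mathbb{R}_{\ge0}^n:\sum_{j\in B}s_{ij}\le c_i\}$, the strategy space is $\boldsymbol{S}=\prod_{i\in L}S_i$ with elements $\boldsymbol{s}=(s_{ij})$. The interest rate of borrower $j$ is $r_j(\boldsymbol{s})=(r_{\min}-r_{\max})\frac{\sum_{i\in L}s_{ij}}{d_j}+r_{\max}$ and lender $i$'s utility is $u_i(\boldsymbol{s})=\sum_{j\in B}(r_j(\boldsymbol{s})-r_{\min})s_{ij}$. A pure Nash equilibrium is $\boldsymbol{s}^*\in\boldsymbol{S}$ with $u_i(\boldsymbol{s}^* )\ge u_i(s_i,\boldsymbol{s}^*_{-i})$ for all $i\in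 L$, $s_i\in S_i$. The potential function is $$\Phi(\boldsymbol{s})=\sum_{j\in B}\sum_{i\in L}\Bigl((r_{\min}-r_{\max})\frac{\sum_{\ell=1}^{i}s_{\ell j}}{d_j}+r_{\max}-r_{\min}\Bigr)s_{ij},$$ equivalently $\Phi(\boldsymbol{s})=\sum_{j\in B}\Bigl(\frac{r_{\min}-r_{\max}}{2d_j}\bigl(\sum_{i}s_{ij}^2+(\sum_i s_{ij})^2\bigr)+(r_{\max}-r_{\min})\sum_i s_{ij}\Bigr)$. *)

theory Defs
  imports Main "HOL.Real"
begin

text \<open>Lenders are indexed by 1..m, borrowers by 1..n. A strategy profile is
  s :: nat => nat => real, with s i j the amount lender i lends to borrower j
  (only the entries with i in 1..m, j in 1..n are meaningful).\<close>

definition interest_rate ::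
  "nat \<Rightarrow> (nat \<Rightarrow> real) \<Rightarrow> real \<Rightarrow> real \<Rightarrow> (nat \<Rightarrow> nat \<Rightarrow> real) \<Rightarrow> nat \<Rightarrow> real" where
  "interest_rate m d rmax rmin s j =
     (rmin - rmax) * (\<Sum>i=1..m. s i j) / d j + rmax"

definition utility ::
  "nat \<Rightarrow> nat \<Rightarrow> (nat \<Rightarrow> real) \<Rightarrow> real \<Rightarrow> real \<Rightarrow> (nat \<Rightarrow> nat \<Rightarrow> real) \<Rightarrow> nat \<Rightarrow> real" where
  "utility m n d rmax rmin s i =
     (\<Sum>j=1..n. (interest_rate m d rmax rmin s j - rmin) * s i j)"

definition strategy_of :: "nat \<Rightarrow> (nat \<Rightarrow> real) \<Rightarrow> nat \<Rightarrow> (nat \<Rightarrow> real) \<Rightarrow> bool" where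
  "strategy_of n c i t \<longleftrightarrow> (\<forall>j\<in>{1..n}. t j \<ge> 0) \<and> (\<Sum>j=1..n. t j) \<le> c i"

definition profile :: "nat \<Rightarrow> nat \<Rightarrow> (nat \<Rightarrow> real) \<Rightarrow> (nat \<Rightarrow> nat \<Rightarrow> real) \<Rightarrow> bool" where
  "profile m n c s \<longleftrightarrow> (\<forall>i\<in>{1..m}. strategy_of n c i (s i))"

definition pure_NE ::
  "nat \<Rightarrow> nat \<Rightarrow> (nat \<Rightarrow> real) \<Rightarrow> (nat \<Rightarrow> real) \<Rightarrow> real \<Rightarrow> real \<Rightarrow> (nat \<Rightarrow> nat \<Rightarrow> real) \<Rightarrow> bool" where
  "pure_NE m n c d rmax rmin s \<longleftrightarrow> profile m n c s \<and>
     (\<forall>i\<in>{1..m}. \<forall>t. strategy_of n c i t \<longrightarrow>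
        utility m n d rmax rmin s i \<ge> utility m n d rmax rmin (s(i := t)) i)"

end

theory Submission imports Defs begin

text \<open>
  Every payoff \<open>u\<^sub>i\<close> is a concave quadratic in lender \<open>i\<close>'s own strategy, so a profile
  satisfying the KKT conditions is a best response for every lender, that is, a Nash
  equilibrium. Conversely, comparing an equilibrium \<open>s\<close> with a KKT point \<open>x\<close> through their
  first-order conditions and summing over the lenders yields \<open>\<Sum>\<^sub>j (\<Sum>\<^sub>i e\<^sub>i\<^sub>j\<^sup>2 / 2 + (\<Sum>\<^sub>i e\<^sub>i\<^sub>j)\<^sup>2) / d\<^sub>j \<le> 0\<close> for \<open>e = x - s\<close>,
  so \<open>s = x\<close>.

  The profile \<open>s\<^sup>*\<close> is a water-filling: lender \<open>i\<close> lends \<open>min c\<^sub>i Q\<close> in total, spread over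
  the borrowers proportionally to their demands, where the level \<open>Q = q D\<close> is determined by
  \<open>\<Sum>\<^sub>i min c\<^sub>i Q = D - Q\<close>; the index \<open>mbar\<close> locates \<open>Q\<close> among the sorted budgets.
  The multiplier of a lender is proportional to \<open>Q - min c\<^sub>i Q\<close>, so it is nonnegative and
  vanishes unless the budget is exhausted.
\<close>

text \<open>\<open>\<partial>u\<^sub>i/\<partial>s\<^sub>i\<^sub>j\<close>, which equals \<open>\<partial>\<Phi>/\<partial>s\<^sub>i\<^sub>j\<close>.\<close>
definition marginal_utility ::
  "nat \<Rightarrow> (nat \<Rightarrow> real) \<Rightarrow> real \<Rightarrow> real \<Rightarrow> (nat \<Rightarrow> nat \<Rightarrow> real) \<Rightarrow> nat \<Rightarrow> nat \<Rightarrow> real" where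
  "marginal_utility m d rmax rmin s i j = (rmin - rmax) * (1 / d j * (s i j + (\<Sum>k=1..m. s k j)) - 1)"

definition KKT_point ::
  "nat \<Rightarrow> nat \<Rightarrow> (nat \<Rightarrow> real) \<Rightarrow> (nat \<Rightarrow> real) \<Rightarrow> real \<Rightarrow> real \<Rightarrow> (nat \<Rightarrow> nat \<Rightarrow> real)
    \<Rightarrow> (nat \<Rightarrow> real) \<Rightarrow> (nat \<Rightarrow> nat \<Rightarrow> real) \<Rightarrow> bool" where
  "KKT_point m n c d rmax rmin s mu mu2 \<longleftrightarrow>
     (\<forall>i\<in>{1..m}. (\<Sum>j=1..n. s i j) \<le> c i \<and> (\<forall>j\<in>{1..n}. s i j \<ge> 0))
   \<and> (\<forall>i\<in>{1..m}. \<forall>j\<in>{1..n}. marginal_utility m d rmax rmin s i j - mu i + mu2 i j = 0)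
   \<and> (\<forall>i\<in>{1..m}. mu i \<ge> 0 \<and> (\<forall>j\<in>{1..n}. mu2 i j \<ge> 0))
   \<and> (\<forall>i\<in>{1..m}. mu i * (c i - (\<Sum>j=1..n. s i j)) = 0 \<and> (\<forall>j\<in>{1..n}. mu2 i j * s i j = 0))"

lemma KKT_point_profile: "KKT_point m n c d rmax rmin s mu mu2 \<Longrightarrow> profile m n c s"
  unfolding KKT_point_def profile_def strategy_of_def by auto

lemma strategy_of_midpoint:
  assumes "strategy_of n c i t" and "strategy_of n c i t'"
  shows "strategy_of n c i (\<lambda>j. (t j + t' j) / 2)"
  using assms unfolding strategy_of_def by (auto simp: sum_divide_distrib[symmetric] sum.distrib)

lemma sum_update_row:
  fixes s :: "nat \<Rightarrow> nat \<Rightarrow> real"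
  assumes "i \<in> {1..m}"
  shows "(\<Sum>k=1..m. (s(i := t)) k j) = (\<Sum>k=1..m. s k j) - s i j + t j"
proof -
  have "(\<Sum>k\<in>{1..m}-{i}. (s(i := t)) k j) = (\<Sum>k\<in>{1..m}-{i}. s k j)"
    by (rule sum.cong) auto
  then show ?thesis
    using sum.remove[OF finite_atLeastAtMost assms, of "\<lambda>k. (s(i := t)) k j"]
      sum.remove[OF finite_atLeastAtMost assms, of "\<lambda>k. s k j"] by simp
qed

lemma utility_update_expansion:
  assumes i: "i \<in> {1..m}" and d: "\<forall>j\<in>{1..n}. d j \<noteq> 0"
  shows "utility m n d rmax rmin (s(i := t)) i - utility m n d rmax rmin s i
    = (\<Sum>j=1..n. marginal_utility m d rmax rmin s i j * (t j - s i j))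
      - (rmax - rmin) * (\<Sum>j=1..n. (t j - s i j)^2 / d j)"
proof -
  have "utility m n d rmax rmin (s(i := t)) i - utility m n d rmax rmin s i
     = (\<Sum>j=1..n. marginal_utility m d rmax rmin s i j * (t j - s i j)
                  - (rmax - rmin) * ((t j - s i j)^2 / d j))"
    unfolding utility_def interest_rate_def sum_update_row[OF i] sum_subtractf[symmetric]
  proof (rule sum.cong[OF refl])
    fix j assume "j \<in> {1..n}"
    with d have "d j \<noteq> 0" by blast
    then show "((rmin - rmax) * ((\<Sum>k=1..m. s k j) - s i j + t j) / d j + rmax - rmin) * (s(i := t)) i j
        - ((rmin - rmax) * (\<Sum>k=1..m. s k j) / d j + rmax - rmin) * s i j
      = marginal_utility m d rmax rmin s i j * (t j - s i j) - (rmax - rmin) * ((t j - s i j)^2 / d j)"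
      unfolding marginal_utility_def by (simp add: field_simps power2_eq_square)
  qed
  then show ?thesis by (simp add: sum_subtractf sum_distrib_left)
qed

lemma marginal_utility_diff:
  assumes "d j \<noteq> 0"
  shows "marginal_utility m d rmax rmin s i j - marginal_utility m d rmax rmin x i j
    = (rmax - rmin) * ((x i j - s i j) + (\<Sum>k=1..m. x k j - s k j)) / d j"
  using assms unfolding marginal_utility_def sum_subtractf by (simp add: field_simps)

lemma KKT_variational_inequality:
  assumes kkt: "KKT_point m n c d rmax rmin x mu mu2"
    and i: "i \<in> {1..m}" and t: "strategy_of n c i t"
  shows "(\<Sum>j=1..n. marginal_utility m d rmax rmin x i j * (t j - x i j)) \<le> 0"
proof -
  have "(\<Sum>j=1..n. marginal_utility m d rmax rmin x i j * (t j - x i j))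
      = (\<Sum>j=1..n. (mu i - mu2 i j) * (t j - x i j))"
  proof (rule sum.cong[OF refl])
    fix j assume "j \<in> {1..n}"
    then have "marginal_utility m d rmax rmin x i j = mu i - mu2 i j"
      using kkt i unfolding KKT_point_def by (simp add: algebra_simps)
    then show "marginal_utility m d rmax rmin x i j * (t j - x i j) = (mu i - mu2 i j) * (t j - x i j)"
      by simp
  qed
  also have "\<dots> = mu i * ((\<Sum>j=1..n. t j) - c i) + mu i * (c i - (\<Sum>j=1..n. x i j))
      - (\<Sum>j=1..n. mu2 i j * t j) + (\<Sum>j=1..n. mu2 i j * x i j)"
    by (simp add: algebra_simps sum.distrib sum_subtractf flip: sum_distrib_left)
  also have "\<dots> = mu i * ((\<Sum>j=1..n. t j) - c i) - (\<Sum>j=1..n. mu2 i j * t j)"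
  proof -
    have "mu i * (c i - (\<Sum>j=1..n. x i j)) = 0"
      using kkt i unfolding KKT_point_def by blast
    moreover have "(\<Sum>j=1..n. mu2 i j * x i j) = 0"
      by (rule sum.neutral) (use kkt i in \<open>simp add: KKT_point_def\<close>)
    ultimately show ?thesis by simp
  qed
  also have "\<dots> \<le> 0"
  proof -
    have "mu i * ((\<Sum>j=1..n. t j) - c i) \<le> 0"
      using kkt i t unfolding KKT_point_def strategy_of_def by (simp add: mult_nonneg_nonpos)
    moreover have "0 \<le> (\<Sum>j=1..n. mu2 i j * t j)"
      using kkt i t unfolding KKT_point_def strategy_of_def by (intro sum_nonneg) auto
    ultimately show ?thesis by linarith
  qed
  finally show ?thesis .
qed

lemma KKT_point_imp_pure_NE:
  assumes d: "\<forall>j\<in>{1..n}. d j > 0" and r: "rmin < rmax"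
    and kkt: "KKT_point m n c d rmax rmin x mu mu2"
  shows "pure_NE m n c d rmax rmin x"
proof -
  have "utility m n d rmax rmin (x(i := t)) i \<le> utility m n d rmax rmin x i"
    if i: "i \<in> {1..m}" and t: "strategy_of n c i t" for i t
  proof -
    have "0 \<le> (rmax - rmin) * (\<Sum>j=1..n. (t j - x i j)^2 / d j)"
      using r d by (intro mult_nonneg_nonneg sum_nonneg) (simp_all add: less_imp_le)
    then show ?thesis
      using utility_update_expansion[OF i, of n d rmax rmin x t] d
        KKT_variational_inequality[OF kkt i t] by force
  qed
  then show ?thesis unfolding pure_NE_def using KKT_point_profile[OF kkt] by blast
qed

lemma pure_NE_marginal_bound:
  assumes d: "\<forall>j\<in>{1..n}. d j \<noteq> 0"
    and NE: "pure_NE m n c d rmax rmin s" and i: "i \<in> {1..m}" and t: "strategy_of n c i t"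
  shows "(\<Sum>j=1..n. marginal_utility m d rmax rmin s i j * (t j - s i j))
    \<le> (rmax - rmin) / 2 * (\<Sum>j=1..n. (t j - s i j)^2 / d j)"
proof -
  \<comment> \<open>Deviating only halfway to \<open>t\<close> makes the quadratic term small enough without a limit argument.\<close>
  define h where "h j = (s i j + t j) / 2" for j
  have "strategy_of n c i (s i)" using NE i unfolding pure_NE_def profile_def by blast
  then have "strategy_of n c i h" unfolding h_def using t by (rule strategy_of_midpoint)
  then have no_gain: "utility m n d rmax rmin (s(i := h)) i \<le> utility m n d rmax rmin s i"
    using NE i unfolding pure_NE_def by blast
  have half: "h j - s i j = (t j - s i j) / 2" for j
    unfolding h_def by (simp add: field_simps)
  then have "(\<Sum>j=1..n. marginal_utility m d rmax rmin s i j * (h j - s i j))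
      = (\<Sum>j=1..n. marginal_utility m d rmax rmin s i j * (t j - s i j)) / 2"
    and "(\<Sum>j=1..n. (h j - s i j)^2 / d j) = (\<Sum>j=1..n. (t j - s i j)^2 / d j) / 4"
    by (simp_all only: half sum_divide_distrib power_divide times_divide_eq_right) (simp add: mult.commute)
  then have "utility m n d rmax rmin (s(i := h)) i - utility m n d rmax rmin s i
      = (\<Sum>j=1..n. marginal_utility m d rmax rmin s i j * (t j - s i j)) / 2
        - (rmax - rmin) * ((\<Sum>j=1..n. (t j - s i j)^2 / d j) / 4)"
    by (simp only: utility_update_expansion[OF i d])
  with no_gain have "(\<Sum>j=1..n. marginal_utility m d rmax rmin s i j * (t j - s i j)) / 2
      - (rmax - rmin) * ((\<Sum>j=1..n. (t j - s i j)^2 / d j) / 4) \<le> 0"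
    by linarith
  then show ?thesis by (simp add: field_simps)
qed

lemma KKT_point_pure_NE_lender_ineq:
  assumes d: "\<forall>j\<in>{1..n}. d j > 0" and r: "rmin < rmax"
    and kkt: "KKT_point m n c d rmax rmin x mu mu2"
    and NE: "pure_NE m n c d rmax rmin s" and i: "i \<in> {1..m}"
  shows "(\<Sum>j=1..n. ((x i j - s i j)^2 / 2 + (\<Sum>k=1..m. x k j - s k j) * (x i j - s i j)) / d j) \<le> 0"
proof -
  have d0: "\<forall>j\<in>{1..n}. d j \<noteq> 0" using d by force
  define e where "e j = x i j - s i j" for j
  define E where "E j = (\<Sum>k=1..m. x k j - s k j)" for j
  define a where "a = rmax - rmin"
  have "a > 0" unfolding a_def using r by simp
  have "strategy_of n c i (x i)" "strategy_of n c i (s i)"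
    using KKT_point_profile[OF kkt] NE i unfolding pure_NE_def profile_def by auto
  then have "(\<Sum>j=1..n. marginal_utility m d rmax rmin s i j * e j) \<le> a / 2 * (\<Sum>j=1..n. e j ^ 2 / d j)"
    and "(\<Sum>j=1..n. marginal_utility m d rmax rmin x i j * - e j) \<le> 0"
    using pure_NE_marginal_bound[OF d0 NE i] KKT_variational_inequality[OF kkt i]
    unfolding e_def a_def by auto
  then have "(\<Sum>j=1..n. (marginal_utility m d rmax rmin s i j - marginal_utility m d rmax rmin x i j) * e j)
      \<le> a / 2 * (\<Sum>j=1..n. e j ^ 2 / d j)"
    by (simp add: algebra_simps sum_subtractf sum_negf)
  also have "(\<Sum>j=1..n. (marginal_utility m d rmax rmin s i j - marginal_utility m d rmax rmin x i j) * e j)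
      = a * (\<Sum>j=1..n. (e j + E j) * e j / d j)"
    unfolding sum_distrib_left
    by (rule sum.cong[OF refl]) (use d0 in \<open>simp add: marginal_utility_diff e_def E_def a_def\<close>)
  finally have "a * ((\<Sum>j=1..n. (e j + E j) * e j / d j) - (\<Sum>j=1..n. e j ^ 2 / d j) / 2) \<le> 0"
    by (simp add: algebra_simps)
  moreover have "(\<Sum>j=1..n. (e j + E j) * e j / d j) - (\<Sum>j=1..n. e j ^ 2 / d j) / 2
      = (\<Sum>j=1..n. (e j ^ 2 / 2 + E j * e j) / d j)"
    unfolding sum_divide_distrib sum_subtractf[symmetric]
    by (rule sum.cong[OF refl]) (use d0 in \<open>simp add: field_simps power2_eq_square\<close>)
  ultimately show ?thesis using \<open>a > 0\<close> unfolding e_def E_def by (simp add: mult_le_0_iff)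
qed

lemma pure_NE_eq_KKT_point:
  assumes d: "\<forall>j\<in>{1..n}. d j > 0" and r: "rmin < rmax"
    and kkt: "KKT_point m n c d rmax rmin x mu mu2"
    and NE: "pure_NE m n c d rmax rmin s"
  shows "\<forall>i\<in>{1..m}. \<forall>j\<in>{1..n}. s i j = x i j"
proof -
  define e where "e i j = x i j - s i j" for i j
  define E where "E j = (\<Sum>k=1..m. e k j)" for j
  have lender_bound: "(\<Sum>j=1..n. (e i j ^ 2 / 2 + E j * e i j) / d j) \<le> 0" if "i \<in> {1..m}" for i
    using KKT_point_pure_NE_lender_ineq[OF d r kkt NE that] unfolding e_def E_def sum_subtractf .
  \<comment> \<open>Summed over all lenders, the cross terms \<open>E j * e i j\<close> add up to the square \<open>E j ^ 2\<close>.\<close>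
  have column: "(\<Sum>i=1..m. (e i j ^ 2 / 2 + E j * e i j) / d j) = ((\<Sum>i=1..m. e i j ^ 2) / 2 + E j ^ 2) / d j"
    for j
    by (simp add: sum_divide_distrib[symmetric] sum.distrib sum_distrib_left[symmetric]
        E_def power2_eq_square)
  have "(\<Sum>j=1..n. ((\<Sum>i=1..m. e i j ^ 2) / 2 + E j ^ 2) / d j)
      = (\<Sum>i=1..m. \<Sum>j=1..n. (e i j ^ 2 / 2 + E j * e i j) / d j)"
    unfolding column[symmetric] by (rule sum.swap)
  also have "\<dots> \<le> 0" using lender_bound by (rule sum_nonpos)
  finally have total: "(\<Sum>j=1..n. ((\<Sum>i=1..m. e i j ^ 2) / 2 + E j ^ 2) / d j) \<le> 0" .
  have nonneg: "0 \<le> ((\<Sum>i=1..m. e i j ^ 2) / 2 + E j ^ 2) / d j" if "j \<in> {1..n}" for j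
    using d that by (intro divide_nonneg_nonneg add_nonneg_nonneg sum_nonneg) (auto simp: less_imp_le)
  show ?thesis
  proof (intro ballI)
    fix i j assume i: "i \<in> {1..m}" and j: "j \<in> {1..n}"
    have "e i j ^ 2 \<le> (\<Sum>i=1..m. e i j ^ 2)" by (rule member_le_sum[OF i]) auto
    then have "e i j ^ 2 / 2 \<le> (\<Sum>i=1..m. e i j ^ 2) / 2 + E j ^ 2"
      using zero_le_power2[of "E j"] by linarith
    then have "e i j ^ 2 / 2 / d j \<le> ((\<Sum>i=1..m. e i j ^ 2) / 2 + E j ^ 2) / d j"
      by (rule divide_right_mono) (use d j in \<open>simp add: less_imp_le\<close>)
    also have "\<dots> \<le> (\<Sum>j=1..n. ((\<Sum>i=1..m. e i j ^ 2) / 2 + E j ^ 2) / d j)"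
      by (rule member_le_sum[OF j]) (use nonneg in auto)
    finally have "e i j ^ 2 / 2 / d j \<le> 0" using total by linarith
    moreover have "d j > 0" using d j by blast
    ultimately show "s i j = x i j" unfolding e_def by (simp add: divide_le_0_iff)
  qed
qed

lemma proportional_profile_sums:
  fixes s :: "nat \<Rightarrow> nat \<Rightarrow> real" and a d :: "nat \<Rightarrow> real"
  assumes s: "\<forall>i\<in>{1..m}. \<forall>j\<in>{1..n}. s i j = a i / D * d j"
    and D: "D = (\<Sum>j=1..n. d j)"
  shows "i \<in> {1..m} \<Longrightarrow> (\<Sum>j=1..n. s i j) = a i / D * D"
    and "j \<in> {1..n} \<Longrightarrow> (\<Sum>k=1..m. s k j) = (\<Sum>k=1..m. a k) / D * d j"
proof -
  assume "i \<in> {1..m}"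
  then have "(\<Sum>j=1..n. s i j) = (\<Sum>j=1..n. a i / D * d j)"
    using s by (intro sum.cong) auto
  also have "\<dots> = a i / D * D" unfolding D by (rule sum_distrib_left[symmetric])
  finally show "(\<Sum>j=1..n. s i j) = a i / D * D" .
next
  assume "j \<in> {1..n}"
  then have "(\<Sum>k=1..m. s k j) = (\<Sum>k=1..m. a k / D * d j)"
    using s by (intro sum.cong) auto
  also have "\<dots> = (\<Sum>k=1..m. a k) / D * d j"
    by (simp add: sum_distrib_right sum_divide_distrib)
  finally show "(\<Sum>k=1..m. s k j) = (\<Sum>k=1..m. a k) / D * d j" .
qed

lemma water_filling_KKT:
  assumes n: "n > 0" and d: "\<forall>j\<in>{1..n}. d j > 0" and r: "rmin < rmax"
    and c: "\<forall>i\<in>{1..m}. c i \<ge> 0"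
    and D: "D = (\<Sum>j=1..n. d j)"
    and level: "(\<Sum>i=1..m. min (c i) Q) = D - Q"
    and s: "\<forall>i\<in>{1..m}. \<forall>j\<in>{1..n}. s i j = min (c i) Q / D * d j"
    and mu: "\<forall>i\<in>{1..m}. mu i = (rmin - rmax) * (min (c i) Q / D - Q / D)"
  shows "KKT_point m n c d rmax rmin s mu (\<lambda>i j. 0)"
proof -
  have "D > 0" unfolding D using n d by (intro sum_pos) auto
  have "Q \<ge> 0"
  proof (rule ccontr)
    assume "\<not> Q \<ge> 0"
    then have "(\<Sum>i=1..m. min (c i) Q) \<le> 0" by (intro sum_nonpos) auto
    with level \<open>D > 0\<close> \<open>\<not> Q \<ge> 0\<close> show False by linarith
  qed
  note sums = proportional_profile_sums[OF s D]
  have row: "(\<Sum>j=1..n. s i j) = min (c i) Q" if "i \<in> {1..m}" for i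
    using sums(1)[OF that] \<open>D > 0\<close> by simp
  have column: "(\<Sum>k=1..m. s k j) = (D - Q) / D * d j" if "j \<in> {1..n}" for j
    using sums(2)[OF that] by (simp only: level)
  have "marginal_utility m d rmax rmin s i j = mu i" if "i \<in> {1..m}" "j \<in> {1..n}" for i j
  proof -
    have "d j > 0" using d that by blast
    moreover have sij: "s i j = min (c i) Q / D * d j"
      and mui: "mu i = (rmin - rmax) * (min (c i) Q / D - Q / D)"
      using s mu that by auto
    ultimately show ?thesis
      using \<open>D > 0\<close> unfolding marginal_utility_def column[OF that(2)] sij mui
      by (simp add: field_simps)
  qed
  moreover have "mu i \<ge> 0" if "i \<in> {1..m}" for i
    using mu that r \<open>D > 0\<close> by (simp add: mult_nonpos_nonpos divide_right_mono)
  moreover have "mu i * (c i - (\<Sum>j=1..n. s i j)) = 0" if "i \<in> {1..m}" for i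
    using mu that unfolding row[OF that] by (auto simp: min_def)
  moreover have "s i j \<ge> 0" if "i \<in> {1..m}" "j \<in> {1..n}" for i j
  proof -
    have "0 \<le> min (c i) Q" "0 < d j" using c d \<open>Q \<ge> 0\<close> that by auto
    then show ?thesis using s that \<open>D > 0\<close> by simp
  qed
  moreover have "(\<Sum>j=1..n. s i j) \<le> c i" if "i \<in> {1..m}" for i
    unfolding row[OF that] by simp
  ultimately show ?thesis unfolding KKT_point_def by simp
qed

lemma threshold_index_water_level:
  fixes c :: "nat \<Rightarrow> real"
  assumes sorted: "\<forall>i j. 1 \<le> i \<longrightarrow> i \<le> j \<longrightarrow> j \<le> m \<longrightarrow> c i \<le> c j"
    and k0: "k0 = (LEAST k. k \<le> m \<and> (k = m \<or> c (k + 1) > (D - (\<Sum>l=1..k. c l)) / real (m - k + 1)))"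
    and Q: "Q = (D - (\<Sum>l=1..k0. c l)) / real (m - k0 + 1)"
  shows "k0 \<le> m" and "\<forall>i\<in>{1..k0}. c i \<le> Q" and "\<forall>i\<in>{k0<..m}. Q < c i"
proof -
  define P where "P k \<longleftrightarrow> k \<le> m \<and> (k = m \<or> c (k + 1) > (D - (\<Sum>l=1..k. c l)) / real (m - k + 1))" for k
  have k0_Least: "k0 = (LEAST k. P k)" unfolding k0 P_def ..
  have "P k0" unfolding k0_Least by (rule LeastI[of P m]) (simp add: P_def)
  then show "k0 \<le> m" unfolding P_def by blast
  show "\<forall>i\<in>{k0<..m}. Q < c i"
  proof
    fix i assume i: "i \<in> {k0<..m}"
    then have "Q < c (k0 + 1)" using \<open>P k0\<close> unfolding P_def Q by auto
    also have "\<dots> \<le> c i" using sorted i by auto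
    finally show "Q < c i" .
  qed
  show "\<forall>i\<in>{1..k0}. c i \<le> Q"
  proof
    fix i assume i: "i \<in> {1..k0}"
    have "\<not> P (k0 - 1)" by (rule not_less_Least[of _ P, folded k0_Least]) (use i in auto)
    with \<open>k0 \<le> m\<close> i have "c k0 \<le> (D - (\<Sum>l=1..k0 - 1. c l)) / (real (m - k0 + 1) + 1)"
      unfolding P_def by (auto simp: not_less Suc_diff_le)
    moreover have "(\<Sum>l=1..k0. c l) = (\<Sum>l=1..k0 - 1. c l) + c k0"
      using i by (cases k0) auto
    ultimately have "c k0 * real (m - k0 + 1) \<le> D - (\<Sum>l=1..k0. c l)"
      by (simp add: field_simps)
    then have "c k0 \<le> Q" unfolding Q by (simp add: field_simps)
    moreover have "c i \<le> c k0" using sorted i \<open>k0 \<le> m\<close> by auto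
    ultimately show "c i \<le> Q" by simp
  qed
qed

lemma sum_min_water_level:
  fixes c :: "nat \<Rightarrow> real"
  assumes "k \<le> m" and low: "\<forall>i\<in>{1..k}. c i \<le> Q" and high: "\<forall>i\<in>{k<..m}. Q < c i"
    and Q: "Q = (D - (\<Sum>l=1..k. c l)) / real (m - k + 1)"
  shows "(\<Sum>i=1..m. min (c i) Q) = D - Q"
proof -
  have "(\<Sum>i=1..m. min (c i) Q) = (\<Sum>i=1..k. min (c i) Q) + (\<Sum>i\<in>{k<..m}. min (c i) Q)"
    using \<open>k \<le> m\<close> by (subst sum.union_disjoint[symmetric]) (auto intro: sum.cong)
  also have "(\<Sum>i=1..k. min (c i) Q) = (\<Sum>i=1..k. c i)"
    using low by (intro sum.cong) auto
  also have "(\<Sum>i\<in>{k<..m}. min (c i) Q) = real (m - k) * Q"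
    using high by (simp add: less_imp_le)
  also have "(\<Sum>i=1..k. c i) + real (m - k) * Q = D - Q"
  proof -
    have "real (m - k + 1) * Q = D - (\<Sum>l=1..k. c l)" unfolding Q by simp
    then show ?thesis by (simp add: algebra_simps)
  qed
  finally show ?thesis .
qed

theorem theorem3p4:
  fixes m n :: nat and c d :: "nat \<Rightarrow> real" and rmax rmin :: real
    and Dv q :: real and mbar :: nat
    and sstar :: "nat \<Rightarrow> nat \<Rightarrow> real" and mu :: "nat \<Rightarrow> real" and mu2 :: "nat \<Rightarrow> nat \<Rightarrow> real"
  assumes m_pos: "m > 0" and n_pos: "n > 0"
    and c_pos: "\<forall>i\<in>{1..m}. c i > 0"
    and d_pos: "\<forall>j\<in>{1..n}. d j > 0"
    and r_pos: "0 < rmin" and r_lt: "rmin < rmax"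
    and c_sorted: "\<forall>i j. 1 \<le> i \<longrightarrow> i \<le> j \<longrightarrow> j \<le> m \<longrightarrow> c i \<le> c j"
  defines "Dv \<equiv> (\<Sum>k=1..n. d k)"
    and "mbar \<equiv> (LEAST k. k \<le> m \<and>
           (k = m \<or> c (k + 1) > (Dv - (\<Sum>l=1..k. c l)) / real (m - k + 1)))"
    and "q \<equiv> 1 / real (m - mbar + 1) * (1 - (\<Sum>l=1..mbar. c l) / Dv)"
    and "sstar \<equiv> (\<lambda>i j. if i \<le> mbar then c i / Dv * d j else q * d j)"
    and "mu \<equiv> (\<lambda>i. if i \<le> mbar then (rmin - rmax) * (c i / Dv - q) else 0)"
    and "mu2 \<equiv> (\<lambda>i j. 0)"
  shows
    "(\<forall>i\<in>{1..m}. (\<Sum>j=1..n. sstar i j) \<le> c i \<and> (\<forall>j\<in>{1..n}. sstar i j \<ge> 0))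
   \<and> (\<forall>i\<in>{1..m}. \<forall>j\<in>{1..n}.
        (rmin - rmax) * (1 / d j * (sstar i j + (\<Sum>k=1..m. sstar k j)) - 1) - mu i + mu2 i j = 0)
   \<and> (\<forall>i\<in>{1..m}. mu i \<ge> 0 \<and> (\<forall>j\<in>{1..n}. mu2 i j \<ge> 0))
   \<and> (\<forall>i\<in>{1..m}. mu i * (c i - (\<Sum>j=1..n. sstar i j)) = 0 \<and> (\<forall>j\<in>{1..n}. mu2 i j * sstar i j = 0))
   \<and> pure_NE m n c d rmax rmin sstar
   \<and> (\<forall>s. pure_NE m n c d rmax rmin s \<longrightarrow> (\<forall>i\<in>{1..m}. \<forall>j\<in>{1..n}. s i j = sstar i j))"
proof -
  define Q where "Q = (Dv - (\<Sum>l=1..mbar. c l)) / real (m - mbar + 1)"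
  have "mbar \<le> m" and low: "\<forall>i\<in>{1..mbar}. c i \<le> Q" and high: "\<forall>i\<in>{mbar<..m}. Q < c i"
    using threshold_index_water_level[OF c_sorted mbar_def[THEN meta_eq_to_obj_eq] Q_def] by auto
  have "Dv > 0" unfolding Dv_def using n_pos d_pos by (intro sum_pos) auto
  have q: "q = Q / Dv" unfolding q_def Q_def using \<open>Dv > 0\<close> by (simp add: field_simps)
  have min_eq: "min (c i) Q = (if i \<le> mbar then c i else Q)" if "i \<in> {1..m}" for i
    using that low[rule_format, of i] high[rule_format, of i] by (auto simp: min_def)
  have kkt: "KKT_point m n c d rmax rmin sstar mu mu2"
    unfolding mu2_def
  proof (rule water_filling_KKT[OF n_pos d_pos r_lt _ Dv_def[THEN meta_eq_to_obj_eq]])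
    show "\<forall>i\<in>{1..m}. 0 \<le> c i" using c_pos by (simp add: less_imp_le)
    show "(\<Sum>i=1..m. min (c i) Q) = Dv - Q"
      by (rule sum_min_water_level[OF \<open>mbar \<le> m\<close> low high Q_def])
    show "\<forall>i\<in>{1..m}. \<forall>j\<in>{1..n}. sstar i j = min (c i) Q / Dv * d j"
      unfolding sstar_def q by (simp add: min_eq)
    show "\<forall>i\<in>{1..m}. mu i = (rmin - rmax) * (min (c i) Q / Dv - Q / Dv)"
      unfolding mu_def q by (simp add: min_eq)
  qed
  then show ?thesis
    using KKT_point_imp_pure_NE[OF d_pos r_lt kkt] pure_NE_eq_KKT_point[OF d_pos r_lt kkt]
    unfolding KKT_point_def marginal_utility_def by blast
qed

end
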